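(* Let $H$ be a homogeneous elliptic operator of order $2m$ with real constant coefficients on $\mathbb{R}^n$ and let $\Omega\subseteq\mathbb{R}^n$ be an open convex set with nonempty boundary. Then for every $x\in\Omega$, $$\int_{S^{n-1}}\frac{d\sigma(\omega)}{\big(F_H^*(\omega)\,d_\omega(x)\big)^{2m}}\ \ge\ \frac{\mu_H}{d_H^{2m}(x)}.$$
   Context: $H$ has symbol $H(\xi)=\sum_{|\alpha|=2m}a_\alpha\xi^\alpha$, real $a_\alpha$, $H(\xi)>0$ for $\xi\ne0$. $F_H(\xi)=H(\xi)^{1/(2m)}$, $F_H^*(\omega)=\sup_{\xi\neq0}\frac{\omega\cdot\xi}{F_H(\xi)}$, $F_H^{**}(\xi)=\sup_{\omega\neq0}\frac{\xi\cdot\omega}{F_H^*(\omega)}$. $d_\omega(x)=\inf\{|s|:x+s\omega\notin\Omega\}$ and $d_H(x)=\min\{F_H^*(x-y):y\in\partial\Omega\}$. $d\sigma$ is the normalized surface measure on $S^{n-1}$, and $\mu_H$ is the largest constant such that $\mu_H F_H^{**}(\xi)^{2m}\le\int_{S^{n-1}}\frac{(\xi\cdot\omega)^{2m}}{F_H^*(\omega)^{2m}}d\sigma(\omega)$ for all $\xi\in\mathbb{R}^n$. *)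

theory Defs
  imports "HOL-Analysis.Analysis"
begin

definition multi_indices :: "nat \<Rightarrow> ('n::finite \<Rightarrow> nat) set" where
  "multi_indices k = {\<alpha>. (\<Sum>i\<in>UNIV. \<alpha> i) = k}"

definition symbol :: "nat \<Rightarrow> (('n::finite \<Rightarrow> nat) \<Rightarrow> real) \<Rightarrow> real^'n \<Rightarrow> real" where
  "symbol m a \<xi> = (\<Sum>\<alpha>\<in>multi_indices (2*m). a \<alpha> * (\<Prod>i\<in>UNIV. (\<xi>$i) ^ (\<alpha> i)))"

definition elliptic_symbol :: "nat \<Rightarrow> (('n::finite \<Rightarrow> nat) \<Rightarrow> real) \<Rightarrow> bool" where
  "elliptic_symbol m a \<longleftrightarrow> (\<forall>\<xi>::real^'n. \<xi> \<noteq> 0 \<longrightarrow> symbol m a \<xi> > 0)"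

definition F_H :: "nat \<Rightarrow> (('n::finite \<Rightarrow> nat) \<Rightarrow> real) \<Rightarrow> real^'n \<Rightarrow> real" where
  "F_H m a \<xi> = symbol m a \<xi> powr (1 / real (2*m))"

definition F_H_star :: "nat \<Rightarrow> (('n::finite \<Rightarrow> nat) \<Rightarrow> real) \<Rightarrow> real^'n \<Rightarrow> real" where
  "F_H_star m a \<omega> = (SUP \<xi>\<in>{\<xi>. \<xi> \<noteq> 0}. (\<omega> \<bullet> \<xi>) / F_H m a \<xi>)"

definition F_H_star_star :: "nat \<Rightarrow> (('n::finite \<Rightarrow> nat) \<Rightarrow> real) \<Rightarrow> real^'n \<Rightarrow> real" where
  "F_H_star_star m a \<xi> = (SUP \<omega>\<in>{\<omega>. \<omega> \<noteq> 0}. (\<xi> \<bullet> \<omega>) / F_H_star m a \<omega>)"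

text \<open>Normalized surface measure on S^{n-1}, realised as the (normalized) cone measure:
  the average of f over the sphere equals (1/|B|) times the integral over the unit ball B
  of f(x/|x|).\<close>
definition sphere_avg :: "(real^'n::finite \<Rightarrow> real) \<Rightarrow> real" where
  "sphere_avg f = (LINT x:ball 0 1|lborel. f (x /\<^sub>R norm x)) / measure lborel (ball (0::real^'n) 1)"

definition sphere_avg_nn :: "(real^'n::finite \<Rightarrow> ennreal) \<Rightarrow> ennreal" where
  "sphere_avg_nn f = (\<integral>\<^sup>+ x\<in>ball 0 1. f (x /\<^sub>R norm x) \<partial>lborel) / emeasure lborel (ball (0::real^'n) 1)"

definition mu_H :: "nat \<Rightarrow> (('n::finite \<Rightarrow> nat) \<Rightarrow> real) \<Rightarrow> real" where
  "mu_H m a = Sup {\<mu>. \<forall>\<xi>::real^'n. \<mu> * F_H_star_star m a \<xi> ^ (2*m)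
      \<le> sphere_avg (\<lambda>\<omega>. (\<xi> \<bullet> \<omega>) ^ (2*m) / F_H_star m a \<omega> ^ (2*m))}"

definition d_dir_set :: "(real^'n::finite) set \<Rightarrow> real^'n \<Rightarrow> real^'n \<Rightarrow> real set" where
  "d_dir_set \<Omega> \<omega> x = {\<bar>s\<bar> | s. x + s *\<^sub>R \<omega> \<notin> \<Omega>}"

definition d_dir :: "(real^'n::finite) set \<Rightarrow> real^'n \<Rightarrow> real^'n \<Rightarrow> real" where
  "d_dir \<Omega> \<omega> x = Inf (d_dir_set \<Omega> \<omega> x)"

definition d_H :: "nat \<Rightarrow> (('n::finite \<Rightarrow> nat) \<Rightarrow> real) \<Rightarrow> (real^'n) set \<Rightarrow> real^'n \<Rightarrow> real" where
  "d_H m a \<Omega> x = (INF y\<in>frontier \<Omega>. F_H_star m a (x - y))"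

text \<open>Integrand 1/(F*(omega) d_omega(x))^{2m}, with value 0 when d_omega(x) = +infinity.\<close>
definition lhs_integrand :: "nat \<Rightarrow> (('n::finite \<Rightarrow> nat) \<Rightarrow> real) \<Rightarrow> (real^'n) set \<Rightarrow> real^'n \<Rightarrow> real^'n \<Rightarrow> ennreal" where
  "lhs_integrand m a \<Omega> x \<omega> =
     (if d_dir_set \<Omega> \<omega> x = {} then 0
      else ennreal (1 / (F_H_star m a \<omega> * d_dir \<Omega> \<omega> x) ^ (2*m)))"

end

theory Submission
  imports Defs
begin

(* Fix a boundary point y and a hyperplane \<nu> supporting the convex set \<Omega> at y, with
   D = \<nu> \<bullet> (x - y) > 0. Along any direction \<omega> the line through x meets that hyperplane
   at distance D / |\<nu> \<bullet> \<omega>|, so d_\<omega>(x) \<le> D / |\<nu> \<bullet> \<omega>| and the integrand is at least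
   (\<nu> \<bullet> \<omega>)^2m / (D F*(\<omega>))^2m. Averaging and the definition of \<mu>_H give the bound
   \<mu>_H F**(\<nu>)^2m / D^2m, and the Hoelder-type inequality D \<le> F**(\<nu>) F*(x - y) turns it
   into \<mu>_H / F*(x - y)^2m. Optimising over y yields \<mu>_H / d_H(x)^2m. *)

lemma symbol_scaleR: "symbol m a (t *\<^sub>R \<xi>) = t ^ (2*m) * symbol m a \<xi>"
proof -
  have "(\<Prod>i\<in>UNIV. ((t *\<^sub>R \<xi>)$i) ^ \<alpha> i) = t ^ (2*m) * (\<Prod>i\<in>UNIV. (\<xi>$i) ^ \<alpha> i)"
    if "\<alpha> \<in> multi_indices (2*m)" for \<alpha>
  proof -
    have "(\<Prod>i\<in>UNIV. ((t *\<^sub>R \<xi>)$i) ^ \<alpha> i) = (\<Prod>i\<in>UNIV. t ^ \<alpha> i) * (\<Prod>i\<in>UNIV. (\<xi>$i) ^ \<alpha> i)"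
      by (simp add: power_mult_distrib prod.distrib)
    also have "(\<Prod>i\<in>UNIV. t ^ \<alpha> i) = t ^ (2*m)"
      using that unfolding multi_indices_def by (metis mem_Collect_eq power_sum)
    finally show ?thesis .
  qed
  then show ?thesis
    unfolding symbol_def by (simp add: sum_distrib_left mult.left_commute)
qed

lemma continuous_on_symbol: "continuous_on S (symbol m a)"
  unfolding symbol_def by (intro continuous_intros)

lemma symbol_0: "m \<ge> 1 \<Longrightarrow> symbol m a 0 = 0"
  using symbol_scaleR[of m a 0 0] by (simp add: power_0_left)

lemma symbol_nonneg: "elliptic_symbol m a \<Longrightarrow> m \<ge> 1 \<Longrightarrow> symbol m a \<xi> \<ge> 0"
  by (cases "\<xi> = 0") (auto simp: elliptic_symbol_def symbol_0 less_imp_le)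

lemma mu_H_mult_le:
  fixes \<nu> :: "real^'n::finite"
  assumes "F_H_star_star m a \<nu> ^ (2*m) > 0"
  shows "mu_H m a * F_H_star_star m a \<nu> ^ (2*m)
     \<le> sphere_avg (\<lambda>\<omega>. (\<nu> \<bullet> \<omega>) ^ (2*m) / F_H_star m a \<omega> ^ (2*m))"
proof -
  let ?B = "\<lambda>\<xi>::real^'n. sphere_avg (\<lambda>\<omega>. (\<xi> \<bullet> \<omega>) ^ (2*m) / F_H_star m a \<omega> ^ (2*m))"
  let ?S = "{\<mu>. \<forall>\<xi>::real^'n. \<mu> * F_H_star_star m a \<xi> ^ (2*m) \<le> ?B \<xi>}"
  have "0 \<in> ?S"
    unfolding sphere_avg_def set_lebesgue_integral_def
    by (auto intro!: divide_nonneg_nonneg integral_nonneg zero_le_even_power simp: indicator_def)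
  then have "Sup ?S \<le> ?B \<nu> / F_H_star_star m a \<nu> ^ (2*m)"
    using assms by (intro cSup_least) (auto simp: pos_le_divide_eq simp del: mem_Collect_eq)
  then show ?thesis unfolding mu_H_def using assms by (simp add: pos_le_divide_eq)
qed

lemma sphere_avg_scale: "sphere_avg (\<lambda>\<omega>. c * g \<omega>) = c * sphere_avg g"
  by (simp add: sphere_avg_def set_lebesgue_integral_def mult.left_commute)

lemma ennreal_sphere_avg_le_sphere_avg_nn:
  fixes g :: "real^'n::finite \<Rightarrow> real"
  assumes g: "\<And>\<omega>. 0 \<le> g \<omega>" and le: "\<And>\<omega>. ennreal (g \<omega>) \<le> L \<omega>"
  shows "ennreal (sphere_avg g) \<le> sphere_avg_nn L"
proof -
  let ?B = "ball (0::real^'n) 1"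
  define h where "h x = indicator ?B x *\<^sub>R g (x /\<^sub>R norm x)" for x
  have h_nonneg: "0 \<le> h x" for x unfolding h_def using g by (simp add: indicator_def)
  have M: "emeasure lborel ?B = ennreal (measure lborel ?B)" "measure lborel ?B > 0"
    using emeasure_lborel_ball_finite[of "0::real^'n" 1]
    by (auto intro!: emeasure_eq_ennreal_measure content_ball_pos)
  have "ennreal (integral\<^sup>L lborel h) \<le> (\<integral>\<^sup>+ x\<in>?B. L (x /\<^sub>R norm x) \<partial>lborel)"
  proof (cases "integrable lborel h")
    case True
    then have "ennreal (integral\<^sup>L lborel h) = (\<integral>\<^sup>+ x. ennreal (h x) \<partial>lborel)"
      using h_nonneg by (intro nn_integral_eq_integral[symmetric]) auto
    also have "\<dots> \<le> (\<integral>\<^sup>+ x\<in>?B. L (x /\<^sub>R norm x) \<partial>lborel)"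
      using le by (intro nn_integral_mono) (auto simp: h_def indicator_def)
    finally show ?thesis .
  qed (simp add: not_integrable_integral_eq)
  then have "ennreal (integral\<^sup>L lborel h) / ennreal (measure lborel ?B) \<le> sphere_avg_nn L"
    unfolding sphere_avg_nn_def M(1) by (rule divide_right_mono_ennreal)
  moreover have "sphere_avg g = integral\<^sup>L lborel h / measure lborel ?B"
    unfolding sphere_avg_def set_lebesgue_integral_def h_def ..
  ultimately show ?thesis
    using M(2) h_nonneg by (simp add: divide_ennreal integral_nonneg)
qed

lemma open_convex_strict_support:
  fixes \<Omega> :: "'a::euclidean_space set"
  assumes "open \<Omega>" "convex \<Omega>" "\<Omega> \<noteq> {}" "y \<notin> \<Omega>"
  obtains \<nu> where "\<And>z. z \<in> \<Omega> \<Longrightarrow> \<nu> \<bullet> y < \<nu> \<bullet> z"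
proof -
  obtain \<nu> b where \<nu>: "\<nu> \<noteq> 0" "\<nu> \<bullet> y \<le> b" "\<And>z. z \<in> \<Omega> \<Longrightarrow> b \<le> \<nu> \<bullet> z"
    using separating_hyperplane_sets[of "{y}" \<Omega>] assms by auto
  have "\<nu> \<bullet> y < \<nu> \<bullet> z" if z: "z \<in> \<Omega>" for z
  proof -
    obtain e where e: "e > 0" "ball z e \<subseteq> \<Omega>" using assms(1) z open_contains_ball by blast
    define z' where "z' = z - (e / 2 / norm \<nu>) *\<^sub>R \<nu>"
    have "z' \<in> ball z e" using \<nu>(1) e(1) by (simp add: z'_def dist_norm)
    then have "b \<le> \<nu> \<bullet> z'" using e(2) \<nu>(3) by blast
    moreover have "\<nu> \<bullet> z' = \<nu> \<bullet> z - e / 2 * norm \<nu>"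
      using \<nu>(1) by (simp add: z'_def inner_diff_right dot_square_norm power2_eq_square)
    moreover have "0 < e / 2 * norm \<nu>" using e(1) \<nu>(1) by simp
    ultimately show ?thesis using \<nu>(2) by linarith
  qed
  then show ?thesis using that by blast
qed

lemma bdd_below_d_dir_set: "bdd_below (d_dir_set \<Omega> \<omega> x)"
  unfolding d_dir_set_def by (rule bdd_belowI[of _ 0]) auto

lemma d_dir_le: "x + s *\<^sub>R \<omega> \<notin> \<Omega> \<Longrightarrow> d_dir \<Omega> \<omega> x \<le> \<bar>s\<bar>"
  unfolding d_dir_def by (rule cInf_lower[OF _ bdd_below_d_dir_set]) (auto simp: d_dir_set_def)

lemma d_dir_pos:
  assumes "open \<Omega>" "x \<in> \<Omega>" "\<omega> \<noteq> 0" "d_dir_set \<Omega> \<omega> x \<noteq> {}"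
  shows "0 < d_dir \<Omega> \<omega> x"
proof -
  obtain r where r: "r > 0" "ball x r \<subseteq> \<Omega>" using assms(1,2) open_contains_ball by blast
  have "r / norm \<omega> \<le> \<bar>s\<bar>" if "x + s *\<^sub>R \<omega> \<notin> \<Omega>" for s
  proof -
    have "r \<le> \<bar>s\<bar> * norm \<omega>" using that r(2) by (force simp: dist_norm)
    then show ?thesis using assms(3) by (simp add: divide_le_eq)
  qed
  then have "r / norm \<omega> \<le> d_dir \<Omega> \<omega> x"
    unfolding d_dir_def using assms(4) by (intro cInf_greatest) (auto simp: d_dir_set_def)
  moreover have "0 < r / norm \<omega>" using r(1) assms(3) by simp
  ultimately show ?thesis by linarith
qed

lemma div_INF_power_le:
  fixes t :: "'a \<Rightarrow> real"
  assumes "S \<noteq> {}" "\<And>y. y \<in> S \<Longrightarrow> 0 < t y" "0 < c" "0 < N"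
    and le: "\<And>y. y \<in> S \<Longrightarrow> c / t y ^ N \<le> A"
  shows "c / (INF y\<in>S. t y) ^ N \<le> A"
proof -
  obtain y0 where "y0 \<in> S" using assms(1) by blast
  then have "0 < A" using le[of y0] assms(2,3) by (smt (verit) divide_pos_pos zero_less_power)
  define r where "r = root N (c / A)"
  have r: "0 < r" "r ^ N = c / A"
    using assms(3,4) \<open>0 < A\<close> by (simp_all add: r_def real_root_pow_pos2)
  have "r \<le> t y" if y: "y \<in> S" for y
  proof -
    have "c / A \<le> t y ^ N"
      using le[OF y] \<open>0 < A\<close> assms(2)[OF y] by (simp add: divide_le_eq mult.commute)
    then have "root N (c / A) \<le> root N (t y ^ N)" using assms(4) by (simp add: real_root_le_iff)
    then show ?thesis using assms(2)[OF y] assms(4) by (simp add: r_def real_root_power_cancel)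
  qed
  then have "r \<le> (INF y\<in>S. t y)" by (intro cINF_greatest[OF assms(1)])
  then have "c / A \<le> (INF y\<in>S. t y) ^ N" using r by (metis power_mono less_imp_le)
  moreover have "0 < (INF y\<in>S. t y)" using r(1) \<open>r \<le> _\<close> by linarith
  ultimately show ?thesis using \<open>0 < A\<close> by (simp add: divide_le_eq mult.commute)
qed

context
  fixes m :: nat and a :: "('n::finite \<Rightarrow> nat) \<Rightarrow> real"
  assumes ell: "elliptic_symbol m a" and m1: "m \<ge> 1"
begin

lemma F_H_pos: "\<xi> \<noteq> 0 \<Longrightarrow> F_H m a (\<xi>::real^'n) > 0"
  using ell[unfolded elliptic_symbol_def, rule_format, of \<xi>] by (simp add: F_H_def)

lemma F_H_0 [simp]: "F_H m a (0::real^'n) = 0"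
  using m1 by (simp add: F_H_def symbol_0)

lemma F_H_scaleR: "F_H m a (t *\<^sub>R \<xi>) = \<bar>t\<bar> * F_H m a (\<xi>::real^'n)"
proof (cases "t = 0")
  case True
  then show ?thesis by simp
next
  case False
  have "t ^ (2*m) = \<bar>t\<bar> ^ (2*m)" by (simp add: power_mult power2_abs)
  also have "\<dots> = \<bar>t\<bar> powr real (2*m)" using False by (simp add: powr_realpow[symmetric])
  finally have "F_H m a (t *\<^sub>R \<xi>) = (\<bar>t\<bar> powr real (2*m) * symbol m a \<xi>) powr (1 / real (2*m))"
    by (simp add: F_H_def symbol_scaleR)
  also have "\<dots> = (\<bar>t\<bar> powr real (2*m)) powr (1 / real (2*m)) * F_H m a \<xi>"
    using symbol_nonneg[OF ell m1] by (simp add: F_H_def powr_mult)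
  also have "(\<bar>t\<bar> powr real (2*m)) powr (1 / real (2*m)) = \<bar>t\<bar>"
    using m1 False by (simp add: powr_powr)
  finally show ?thesis .
qed

lemma F_H_eq_norm_mult_sgn: "F_H m a \<xi> = norm \<xi> * F_H m a (sgn (\<xi>::real^'n))"
  using F_H_scaleR[of "norm \<xi>" "sgn \<xi>"] by (cases "\<xi> = 0") (simp_all add: sgn_div_norm)

lemma F_H_ge_const_mult_norm:
  obtains c where "0 < c" "\<And>\<xi>::real^'n. c * norm \<xi> \<le> F_H m a \<xi>"
proof -
  obtain u where u: "u \<in> sphere 0 1" "\<And>v. v \<in> sphere 0 1 \<Longrightarrow> symbol m a u \<le> symbol m a v"
    using continuous_attains_inf[OF compact_sphere _ continuous_on_symbol[of "sphere (0::real^'n) 1" m a]]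
    by auto
  have "F_H m a u \<le> F_H m a (sgn \<xi>)" if "\<xi> \<noteq> 0" for \<xi> :: "real^'n"
    unfolding F_H_def using u(2)[of "sgn \<xi>"] that symbol_nonneg[OF ell m1]
    by (intro powr_mono2) (auto simp: norm_sgn)
  then have "F_H m a u * norm \<xi> \<le> F_H m a \<xi>" for \<xi> :: "real^'n"
    by (cases "\<xi> = 0") (auto simp: F_H_eq_norm_mult_sgn[of \<xi>] mult.commute mult_left_mono)
  moreover have "F_H m a u > 0" using u(1) by (intro F_H_pos) auto
  ultimately show ?thesis using that by blast
qed

lemma F_H_le_const_mult_norm:
  obtains C where "\<And>\<xi>::real^'n. F_H m a \<xi> \<le> C * norm \<xi>"
proof -
  obtain u where u: "u \<in> sphere 0 1" "\<And>v. v \<in> sphere 0 1 \<Longrightarrow> symbol m a v \<le> symbol m a u"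
    using continuous_attains_sup[OF compact_sphere _ continuous_on_symbol[of "sphere (0::real^'n) 1" m a]]
    by auto
  have "F_H m a (sgn \<xi>) \<le> F_H m a u" if "\<xi> \<noteq> 0" for \<xi> :: "real^'n"
    unfolding F_H_def using u(2)[of "sgn \<xi>"] that symbol_nonneg[OF ell m1]
    by (intro powr_mono2) (auto simp: norm_sgn)
  then have "F_H m a \<xi> \<le> F_H m a u * norm \<xi>" for \<xi> :: "real^'n"
    by (cases "\<xi> = 0") (auto simp: F_H_eq_norm_mult_sgn[of \<xi>] mult.commute mult_left_mono)
  then show ?thesis using that by blast
qed

lemma bdd_above_F_H_star_quotients:
  "bdd_above ((\<lambda>\<xi>. (\<omega> \<bullet> \<xi>) / F_H m a \<xi>) ` {\<xi>::real^'n. \<xi> \<noteq> 0})"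
proof -
  obtain c where c: "0 < c" "\<And>\<xi>::real^'n. c * norm \<xi> \<le> F_H m a \<xi>"
    using F_H_ge_const_mult_norm by blast
  have "(\<omega> \<bullet> \<xi>) / F_H m a \<xi> \<le> norm \<omega> / c" if "\<xi> \<noteq> 0" for \<xi>
  proof -
    have "(\<omega> \<bullet> \<xi>) / F_H m a \<xi> \<le> (norm \<omega> * norm \<xi>) / F_H m a \<xi>"
      using F_H_pos[OF that] by (intro divide_right_mono) (auto simp: norm_cauchy_schwarz)
    also have "\<dots> \<le> (norm \<omega> * norm \<xi>) / (c * norm \<xi>)"
      using c that F_H_pos[OF that] by (intro divide_left_mono) auto
    also have "\<dots> = norm \<omega> / c" using that by simp
    finally show ?thesis .
  qed
  then show ?thesis by (intro bdd_aboveI2) auto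
qed

lemma F_H_star_ge: "\<xi> \<noteq> 0 \<Longrightarrow> (\<omega> \<bullet> \<xi>) / F_H m a \<xi> \<le> F_H_star m a (\<omega>::real^'n)"
  unfolding F_H_star_def by (rule cSUP_upper[OF _ bdd_above_F_H_star_quotients]) auto

lemma F_H_star_pos: "\<omega> \<noteq> 0 \<Longrightarrow> F_H_star m a (\<omega>::real^'n) > 0"
  using F_H_star_ge[of \<omega> \<omega>] F_H_pos[of \<omega>]
  by (metis divide_pos_pos inner_gt_zero_iff order_less_le_trans)

lemma F_H_star_ge_norm_div_const:
  obtains C where "C > 0" "\<And>\<omega>::real^'n. norm \<omega> / C \<le> F_H_star m a \<omega>"
proof -
  obtain C where C: "\<And>\<xi>::real^'n. F_H m a \<xi> \<le> C * norm \<xi>"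
    using F_H_le_const_mult_norm by blast
  obtain v :: "real^'n" where v: "v \<noteq> 0" using vector_choose_size[of 1] by fastforce
  have "0 < C * norm v" using C[of v] F_H_pos[OF v] by linarith
  then have "0 < C" by (simp add: zero_less_mult_iff)
  moreover have "norm \<omega> / C \<le> F_H_star m a \<omega>" for \<omega> :: "real^'n"
  proof (cases "\<omega> = 0")
    case True
    then show ?thesis using F_H_star_ge[OF v, of 0] by simp
  next
    case False
    have "norm \<omega> / C = (norm \<omega> * norm \<omega>) / (C * norm \<omega>)" using False by simp
    also have "\<dots> \<le> (norm \<omega> * norm \<omega>) / F_H m a \<omega>"
      using C[of \<omega>] F_H_pos[OF False] by (intro divide_left_mono) auto
    also have "\<dots> = (\<omega> \<bullet> \<omega>) / F_H m a \<omega>" by (simp add: dot_square_norm power2_eq_square)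
    also have "\<dots> \<le> F_H_star m a \<omega>" by (rule F_H_star_ge[OF False])
    finally show ?thesis .
  qed
  ultimately show ?thesis using that by blast
qed

lemma bdd_above_F_H_star_star_quotients:
  "bdd_above ((\<lambda>\<omega>. (\<nu> \<bullet> \<omega>) / F_H_star m a \<omega>) ` {\<omega>::real^'n. \<omega> \<noteq> 0})"
proof -
  obtain C where C: "C > 0" "\<And>\<omega>::real^'n. norm \<omega> / C \<le> F_H_star m a \<omega>"
    using F_H_star_ge_norm_div_const by metis
  have "(\<nu> \<bullet> \<omega>) / F_H_star m a \<omega> \<le> C * norm \<nu>" if "\<omega> \<noteq> 0" for \<omega>
  proof -
    have "(\<nu> \<bullet> \<omega>) / F_H_star m a \<omega> \<le> (norm \<nu> * norm \<omega>) / F_H_star m a \<omega>"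
      using F_H_star_pos[OF that] by (intro divide_right_mono) (auto simp: norm_cauchy_schwarz)
    also have "\<dots> \<le> (norm \<nu> * norm \<omega>) / (norm \<omega> / C)"
      using C that F_H_star_pos[OF that] by (intro divide_left_mono) auto
    also have "\<dots> = C * norm \<nu>" using that C by simp
    finally show ?thesis .
  qed
  then show ?thesis by (intro bdd_aboveI2) auto
qed

lemma inner_le_F_H_star_star_mult_F_H_star:
  "w \<noteq> 0 \<Longrightarrow> \<nu> \<bullet> w \<le> F_H_star_star m a \<nu> * F_H_star m a (w::real^'n)"
  using cSUP_upper[OF _ bdd_above_F_H_star_star_quotients, of w \<nu>] F_H_star_pos[of w]
  by (simp add: F_H_star_star_def divide_le_eq)

lemma lhs_integrand_ge_supporting_hyperplane:
  assumes "open \<Omega>" "x \<in> \<Omega>" and sep: "\<And>z. z \<in> \<Omega> \<Longrightarrow> \<nu> \<bullet> y < \<nu> \<bullet> z"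
  shows "ennreal (1 / (\<nu> \<bullet> (x - y)) ^ (2*m) * ((\<nu> \<bullet> \<omega>) ^ (2*m) / F_H_star m a \<omega> ^ (2*m)))
      \<le> lhs_integrand m a \<Omega> (x::real^'n) \<omega>"
proof (cases "\<nu> \<bullet> \<omega> = 0")
  case True
  then show ?thesis using m1 by (simp add: power_0_left)
next
  case False
  define D where "D = \<nu> \<bullet> (x - y)"
  have D: "0 < D" using sep[OF assms(2)] by (simp add: D_def inner_diff_right)
  define s where "s = - D / (\<nu> \<bullet> \<omega>)"
  have "\<nu> \<bullet> (x + s *\<^sub>R \<omega>) = \<nu> \<bullet> y"
    using False by (simp add: s_def D_def inner_add_right inner_diff_right)
  then have out: "x + s *\<^sub>R \<omega> \<notin> \<Omega>" using sep by force
  then have ne: "d_dir_set \<Omega> \<omega> x \<noteq> {}" by (auto simp: d_dir_set_def)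
  define d where "d = d_dir \<Omega> \<omega> x"
  have "\<omega> \<noteq> 0" using False by auto
  then have d: "0 < d" and Fp: "0 < F_H_star m a \<omega>"
    using d_dir_pos[OF assms(1,2) _ ne] F_H_star_pos by (simp_all add: d_def)
  \<comment> \<open>the line through x in direction \<omega> leaves \<Omega> before reaching the hyperplane\<close>
  have "\<bar>\<nu> \<bullet> \<omega>\<bar> * d \<le> D"
    using d_dir_le[OF out] False D
    by (simp add: d_def s_def abs_divide pos_le_divide_eq mult.commute)
  then have "\<bar>\<nu> \<bullet> \<omega>\<bar> / (D * F_H_star m a \<omega>) \<le> 1 / (F_H_star m a \<omega> * d)"
    using D d Fp by (simp add: divide_simps mult.commute mult.left_commute mult_right_mono)
  then have "(\<bar>\<nu> \<bullet> \<omega>\<bar> / (D * F_H_star m a \<omega>)) ^ (2*m) \<le> (1 / (F_H_star m a \<omega> * d)) ^ (2*m)"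
    using D Fp by (intro power_mono) simp_all
  then show ?thesis
    using ne unfolding lhs_integrand_def D_def[symmetric] d_def[symmetric]
    by (simp add: power_divide power_mult_distrib power_even_abs)
qed

lemma mu_H_div_F_H_star_le_sphere_avg_nn:
  assumes "open \<Omega>" "convex \<Omega>" "x \<in> \<Omega>" "y \<in> frontier \<Omega>" "0 \<le> mu_H m a"
  shows "ennreal (mu_H m a / F_H_star m a (x - y) ^ (2*m))
      \<le> sphere_avg_nn (lhs_integrand m a \<Omega> (x::real^'n))"
proof -
  have y: "y \<notin> \<Omega>" using assms(1,4) by (simp add: frontier_def interior_open)
  then obtain \<nu> where sep: "\<And>z. z \<in> \<Omega> \<Longrightarrow> \<nu> \<bullet> y < \<nu> \<bullet> z"
    using open_convex_strict_support[OF assms(1,2)] assms(3) by blast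
  let ?g = "\<lambda>\<omega>. (\<nu> \<bullet> \<omega>) ^ (2*m) / F_H_star m a \<omega> ^ (2*m)"
  define D where "D = \<nu> \<bullet> (x - y)"
  have D: "0 < D" using sep[OF assms(3)] by (simp add: D_def inner_diff_right)
  have xy: "x - y \<noteq> 0" using assms(3) y by auto
  have hoelder: "D \<le> F_H_star_star m a \<nu> * F_H_star m a (x - y)"
    unfolding D_def by (rule inner_le_F_H_star_star_mult_F_H_star[OF xy])
  have F_star: "0 < F_H_star m a (x - y)" by (rule F_H_star_pos[OF xy])
  then have F_star_star: "0 < F_H_star_star m a \<nu>"
    using hoelder D by (smt (verit) zero_less_mult_iff)
  have "mu_H m a / F_H_star m a (x - y) ^ (2*m)
      = mu_H m a * F_H_star_star m a \<nu> ^ (2*m) / (F_H_star_star m a \<nu> * F_H_star m a (x - y)) ^ (2*m)"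
    using F_star_star by (simp add: power_mult_distrib)
  also have "\<dots> \<le> mu_H m a * F_H_star_star m a \<nu> ^ (2*m) / D ^ (2*m)"
    using hoelder D assms(5) by (intro divide_left_mono power_mono mult_pos_pos) auto
  also have "\<dots> \<le> 1 / D ^ (2*m) * sphere_avg ?g"
    using mu_H_mult_le[of m a \<nu>] F_star_star D by (simp add: divide_right_mono)
  also have "\<dots> = sphere_avg (\<lambda>\<omega>. 1 / D ^ (2*m) * ?g \<omega>)"
    by (rule sphere_avg_scale[symmetric])
  finally have "ennreal (mu_H m a / F_H_star m a (x - y) ^ (2*m))
      \<le> ennreal (sphere_avg (\<lambda>\<omega>. 1 / D ^ (2*m) * ?g \<omega>))"
    by (rule ennreal_leI)
  also have "\<dots> \<le> sphere_avg_nn (lhs_integrand m a \<Omega> x)"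
    using lhs_integrand_ge_supporting_hyperplane[OF assms(1,3) sep] D
    by (intro ennreal_sphere_avg_le_sphere_avg_nn) (auto simp: D_def zero_le_even_power)
  finally show ?thesis .
qed

end

theorem mainTheorem5:
  fixes m :: nat and a :: "('n::finite \<Rightarrow> nat) \<Rightarrow> real"
    and \<Omega> :: "(real^'n) set" and x :: "real^'n"
  assumes "m \<ge> 1"
    and "elliptic_symbol m a"
    and "open \<Omega>" and "convex \<Omega>" and "frontier \<Omega> \<noteq> {}"
    and "x \<in> \<Omega>"
  shows "sphere_avg_nn (lhs_integrand m a \<Omega> x)
           \<ge> ennreal (mu_H m a / d_H m a \<Omega> x ^ (2*m))"
proof (cases "0 < mu_H m a \<and> sphere_avg_nn (lhs_integrand m a \<Omega> x) \<noteq> top")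
  case True
  then obtain A where A: "sphere_avg_nn (lhs_integrand m a \<Omega> x) = ennreal A" "0 \<le> A"
    by (cases "sphere_avg_nn (lhs_integrand m a \<Omega> x)") auto
  have "mu_H m a / F_H_star m a (x - y) ^ (2*m) \<le> A" if "y \<in> frontier \<Omega>" for y
    using mu_H_div_F_H_star_le_sphere_avg_nn[OF assms(2,1,3,4,6) that] True A
    by (simp add: ennreal_le_iff)
  moreover have "0 < F_H_star m a (x - y)" if "y \<in> frontier \<Omega>" for y
  proof -
    have "y \<notin> \<Omega>" using that assms(3) by (simp add: frontier_def interior_open)
    then show ?thesis using assms(6) by (intro F_H_star_pos[OF assms(2,1)]) auto
  qed
  ultimately have "mu_H m a / d_H m a \<Omega> x ^ (2*m) \<le> A"
    unfolding d_H_def using True assms(1,5) by (intro div_INF_power_le) auto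
  then show ?thesis using A by (simp add: ennreal_leI)
next
  case False
  then show ?thesis by (auto simp: ennreal_neg divide_nonpos_nonneg zero_le_even_power)
qed

end
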